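(* Consider $n\in\mathbb{N}$ users whose states $x^i_t\in\{0,1\}$ ($i\in\{1,\dots,n\}$, $t\in\mathbb{N}$) evolve under the controlled dynamics and strategies described in the context, and let $m_t=\frac1n\sum_{i=1}^n \mathbb{1}(x^i_t=1)$. For every $t\in\mathbb{N}$, every realization $m_{1:t}\in\mathcal{M}^t$ of the mean-field history, and all reserve and demand actions $g^r_{1:t}\in(\{1,\dots,k\})^t$, $g^d_{1:t}\in(\{1,\dots,k\})^t$, $$\mathbb{P}(m_{t+1}\mid m_{1:t},g^r_{1:t},g^d_{1:t})=\mathbb{P}(m_{t+1}\mid m_t,g^r_t,g^d_t),$$ i.e. the mean-field process is a controlled Markov process under the reserve and demand actions.
   Context: Fix $n\in\mathbb{N}$ users, a demand probability $p\in(0,1)$, and $k\in\mathbb{N}$ options $\{1,\dots,k\}$. Each option $u$ has a participation rate $\alpha(u)\in[0,1]$ and a delivery rate $q(u,m)\in(0,1]$ depending also on $m\in\mathcal{M}:=\{0,\frac1n,\frac2n,\dots,1\}$. User $i$ has state $x^i_t\in\{0,1\}$ ($1$ = has a demand). The mean-field is $m_t=\frac1n\sum_{i=1}^n\mathbb{1}(x^i_t=1)\in\mathcal{M}$. Given the option $u^i_t$ assigned to user $i$ and $m_t$, the user's next state has transition probabilities $\mathbb{P}(x^i_{t+1}=1\mid x^i_t=0,u^i_t,m_t)=(1-\alpha(u^i_t))p$, $\mathbb{P}(x^i_{t+1}=0\mid x^i_t=0,u^i_t,m_t)=1-(1-\alpha(u^i_t))p$, $\mathbb{P}(x^i_{t+1}=0\mid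 x^i_t=1,u^i_t,m_t)=q(u^i_t,m_t)$, $\mathbb{P}(x^i_{t+1}=1\mid x^i_t=1,u^i_t,m_t)=1-q(u^i_t,m_t)$; conditionally on the current joint states and actions, the users' transitions are mutually independent. Admissible control laws have the form $u^i_t=g_t(x^i_t,m_{1:t})$ with $g_t:\{0,1\}\times\mathcal{M}^t\to\{1,\dots,k\}$ (the same for all users). The reserve action is $g^r_t:=g_t(0,m_{1:t})$ and the demand action is $g^d_t:=g_t(1,m_{1:t})$, so $u^i_t=\mathbb{1}(x^i_t=0)g^r_t+\mathbb{1}(x^i_t=1)g^d_t$. *)

theory Defs
  imports "HOL-Probability.Probability"
begin

text \<open>Joint state of the n users: a bool list of length n (True = has a demand).\<close>

definition mean_field :: "nat \<Rightarrow> bool list \<Rightarrow> real" where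
  "mean_field n xs = real (length (filter id xs)) / real n"

definition MF_space :: "nat \<Rightarrow> real set" where
  "MF_space n = {real j / real n | j. j \<le> n}"

fun indep_list :: "'a pmf list \<Rightarrow> 'a list pmf" where
  "indep_list [] = return_pmf []"
| "indep_list (P # Ps) = bind_pmf P (\<lambda>b. map_pmf (\<lambda>bs. b # bs) (indep_list Ps))"

definition next_state ::
  "nat \<Rightarrow> real \<Rightarrow> (nat \<Rightarrow> real) \<Rightarrow> (nat \<Rightarrow> real \<Rightarrow> real) \<Rightarrow> nat \<Rightarrow> nat \<Rightarrow> bool list \<Rightarrow> bool list pmf" where
  "next_state n p alpha q ar ad x =
     (let m = mean_field n x in
      indep_list (map (\<lambda>b. if b then bernoulli_pmf (1 - q ad m)
                                 else bernoulli_pmf ((1 - alpha ar) * p)) x))"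

text \<open>Law of the state trajectory [x_1, ..., x_(t+1)] under the control law g,
  where g s b h is the action at time s (1-based) for a user in state b given the
  mean-field history h = [m_1, ..., m_s].\<close>
fun traj ::
  "nat \<Rightarrow> real \<Rightarrow> (nat \<Rightarrow> real) \<Rightarrow> (nat \<Rightarrow> real \<Rightarrow> real) \<Rightarrow> bool list pmf
   \<Rightarrow> (nat \<Rightarrow> bool \<Rightarrow> real list \<Rightarrow> nat) \<Rightarrow> nat \<Rightarrow> bool list list pmf" where
  "traj n p alpha q init g 0 = map_pmf (\<lambda>x. [x]) init"
| "traj n p alpha q init g (Suc t) =
     bind_pmf (traj n p alpha q init g t) (\<lambda>xs.
       (let s = length xs; h = map (mean_field n) xs in
        map_pmf (\<lambda>x'. xs @ [x'])
          (next_state n p alpha q (g s False h) (g s True h) (last xs))))"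

definition cond_prob :: "'a pmf \<Rightarrow> 'a set \<Rightarrow> 'a set \<Rightarrow> real" where
  "cond_prob P C A = measure_pmf.prob P (C \<inter> A) / measure_pmf.prob P A"

end

theory Submission
  imports Defs
begin

(* Given the current joint state, the users move independently, so the number of users with a
   demand at time t+1 is the sum of two independent success counts: one over the users with a
   demand (success probability 1 - q(g^d_t, m_t)) and one over the reserve users (success
   probability (1 - alpha(g^r_t)) p).  Its law therefore depends on the joint state only through
   m_t, which yields a kernel in (m_t, g^r_t, g^d_t).  Conditioning on any event of the mean-field
   history up to time t that fixes m_t, g^r_t and g^d_t produces this kernel, and both
   conditioning events of the theorem are of that kind. *)

lemma measure_bind_pmf_eq_integral:
  "measure_pmf.prob (bind_pmf M K) X = (\<integral>x. measure_pmf.prob (K x) X \<partial>M)"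
  unfolding measure_pmf_bind
  by (subst measure_pmf.measure_bind[where N="count_space UNIV"])
     (auto intro: measurable_measure_pmf prob_space_imp_subprob_space
        measure_pmf.prob_space_axioms simp: space_subprob_algebra)

lemma measure_bind_pmf_Int_determined:
  assumes determined: "\<And>x y. x \<in> set_pmf M \<Longrightarrow> y \<in> set_pmf (K x) \<Longrightarrow> y \<in> A \<longleftrightarrow> x \<in> B"
  shows "measure_pmf.prob (bind_pmf M K) (C \<inter> A) =
           (\<integral>x. indicator B x * measure_pmf.prob (K x) C \<partial>M)"
proof -
  have "measure_pmf.prob (K x) (C \<inter> A) = indicator B x * measure_pmf.prob (K x) C"
    if x: "x \<in> set_pmf M" for x
  proof -
    have "C \<inter> A \<inter> set_pmf (K x) = (if x \<in> B then C \<inter> set_pmf (K x) else {})"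
      using determined[OF x] by auto
    then show ?thesis
      by (metis measure_Int_set_pmf measure_empty indicator_simps mult_1 mult_zero_left)
  qed
  then show ?thesis
    unfolding measure_bind_pmf_eq_integral
    by (intro integral_cong_AE) (auto simp: AE_measure_pmf_iff)
qed

lemma measure_bind_pmf_determined:
  assumes "\<And>x y. x \<in> set_pmf M \<Longrightarrow> y \<in> set_pmf (K x) \<Longrightarrow> y \<in> A \<longleftrightarrow> x \<in> B"
  shows "measure_pmf.prob (bind_pmf M K) A = measure_pmf.prob M B"
  using measure_bind_pmf_Int_determined[OF assms, where C=UNIV] by simp

lemma cond_prob_bind_pmf_determined:
  assumes determined: "\<And>x y. x \<in> set_pmf M \<Longrightarrow> y \<in> set_pmf (K x) \<Longrightarrow> y \<in> A \<longleftrightarrow> x \<in> B"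
    and const: "\<And>x. x \<in> set_pmf M \<Longrightarrow> x \<in> B \<Longrightarrow> measure_pmf.prob (K x) C = c"
    and pos: "measure_pmf.prob M B \<noteq> 0"
  shows "cond_prob (bind_pmf M K) C A = c"
proof -
  have "measure_pmf.prob (bind_pmf M K) (C \<inter> A) =
          (\<integral>x. indicator B x * measure_pmf.prob (K x) C \<partial>M)"
    by (rule measure_bind_pmf_Int_determined[OF determined])
  also have "\<dots> = (\<integral>x. c * indicator B x \<partial>M)"
    by (intro integral_cong_AE) (auto simp: AE_measure_pmf_iff const split: split_indicator)
  finally show ?thesis
    using pos by (simp add: cond_prob_def measure_bind_pmf_determined[OF determined])
qed

lemma length_indep_list: "y \<in> set_pmf (indep_list Ps) \<Longrightarrow> length y = length Ps"
  by (induction Ps arbitrary: y) auto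

(* For P = bernoulli_pmf r this is binomial_pmf a r; it is stated for arbitrary P so that no
   range condition on r is required. *)
fun success_count :: "bool pmf \<Rightarrow> nat \<Rightarrow> nat pmf" where
  "success_count P 0 = return_pmf 0"
| "success_count P (Suc a) = bind_pmf P (\<lambda>b. map_pmf (\<lambda>i. i + of_bool b) (success_count P a))"

lemma count_indep_list_map_if:
  "map_pmf (\<lambda>l. length (filter id l)) (indep_list (map (\<lambda>b. if b then P1 else P0) x)) =
   bind_pmf (success_count P1 (length (filter id x)))
     (\<lambda>i. map_pmf (\<lambda>j. i + j) (success_count P0 (length (filter Not x))))"
proof (induction x)
  case Nil
  then show ?case by (simp add: bind_return_pmf)
next
  case (Cons a x)
  have unfold: "map_pmf (\<lambda>l. length (filter id l)) (indep_list (map (\<lambda>b. if b then P1 else P0) (a # x)))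
     = bind_pmf (if a then P1 else P0) (\<lambda>b. map_pmf (\<lambda>i. i + of_bool b)
          (map_pmf (\<lambda>l. length (filter id l)) (indep_list (map (\<lambda>b. if b then P1 else P0) x))))"
    by (simp add: map_bind_pmf map_pmf_comp) (auto intro!: bind_pmf_cong map_pmf_cong)
  show ?case
  proof (cases a)
    case True
    then show ?thesis unfolding unfold Cons.IH
      by (simp add: map_pmf_def bind_assoc_pmf bind_return_pmf add_ac id_def)
  next
    case False
    then show ?thesis unfolding unfold Cons.IH
      by (simp add: map_pmf_def bind_assoc_pmf bind_return_pmf add_ac id_def)
         (subst bind_commute_pmf, simp add: add_ac)
  qed
qed

lemma map_mean_field_next_state_cong:
  assumes "length x1 = n" "length x2 = n" and mf: "mean_field n x1 = mean_field n x2"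
  shows "map_pmf (mean_field n) (next_state n p alpha q ar ad x1) =
         map_pmf (mean_field n) (next_state n p alpha q ar ad x2)"
proof (cases "n = 0")
  case True
  then show ?thesis using assms by simp
next
  case False
  have demand: "length (filter id x1) = length (filter id x2)"
    using mf False by (simp add: mean_field_def)
  have reserve: "length (filter Not x1) = length (filter Not x2)"
    using sum_length_filter_compl[of id x1] sum_length_filter_compl[of id x2] demand assms(1,2)
    by (simp add: comp_def)
  have via_count: "map_pmf (mean_field n) M =
      map_pmf (\<lambda>i. real i / real n) (map_pmf (\<lambda>l. length (filter id l)) M)" for M
    by (simp add: map_pmf_comp mean_field_def[abs_def])
  show ?thesis
    unfolding next_state_def Let_def via_count count_indep_list_map_if demand reserve mf ..
qed

(* Only meaningful for m in MF_space n: otherwise no state has mean field m and the SOME is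
   unconstrained. *)
definition mean_field_kernel ::
  "nat \<Rightarrow> real \<Rightarrow> (nat \<Rightarrow> real) \<Rightarrow> (nat \<Rightarrow> real \<Rightarrow> real) \<Rightarrow> nat \<Rightarrow> nat \<Rightarrow> real \<Rightarrow> real pmf" where
  "mean_field_kernel n p alpha q ar ad m =
     map_pmf (mean_field n) (next_state n p alpha q ar ad (SOME x. length x = n \<and> mean_field n x = m))"

lemma map_mean_field_next_state:
  assumes "length x = n"
  shows "map_pmf (mean_field n) (next_state n p alpha q ar ad x) =
         mean_field_kernel n p alpha q ar ad (mean_field n x)"
proof -
  define y where "y = (SOME y. length y = n \<and> mean_field n y = mean_field n x)"
  have "length y = n \<and> mean_field n y = mean_field n x"
    unfolding y_def by (rule someI[of _ x]) (simp add: assms)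
  then show ?thesis
    unfolding mean_field_kernel_def y_def[symmetric]
    using assms by (intro map_mean_field_next_state_cong) auto
qed

lemma length_set_pmf_traj:
  assumes "\<And>x. x \<in> set_pmf init \<Longrightarrow> length x = n"
    and "xs \<in> set_pmf (traj n p alpha q init g t)"
  shows "length xs = Suc t \<and> (\<forall>x\<in>set xs. length x = n)"
  using assms(2)
proof (induction t arbitrary: xs)
  case 0
  then show ?case using assms by auto
next
  case (Suc t)
  then obtain ys y where ys: "ys \<in> set_pmf (traj n p alpha q init g t)" and xs: "xs = ys @ [y]"
    and y: "y \<in> set_pmf (next_state n p alpha q (g (length ys) False (map (mean_field n) ys))
               (g (length ys) True (map (mean_field n) ys)) (last ys))"
    by (auto simp: Let_def)
  have "length y = length (last ys)"
    using y by (auto simp: next_state_def Let_def dest!: length_indep_list)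
  moreover have "last ys \<in> set ys"
    using Suc.IH[OF ys] by (intro last_in_set) auto
  ultimately show ?case using Suc.IH[OF ys] xs by auto
qed

lemma cond_prob_traj_next_mean_field:
  fixes P :: "real list \<Rightarrow> bool"
  assumes init_len: "\<And>x. x \<in> set_pmf init \<Longrightarrow> length x = n"
    and current: "\<And>hs. length hs = Suc t \<Longrightarrow> P hs \<Longrightarrow>
      hs ! t = m \<and> g (Suc t) False hs = ar \<and> g (Suc t) True hs = ad"
    and pos: "measure_pmf.prob (traj n p alpha q init g (Suc t))
      {xs. P (take (Suc t) (map (mean_field n) xs))} \<noteq> 0"
  shows "cond_prob (traj n p alpha q init g (Suc t))
           {xs. map (mean_field n) xs ! Suc t = m'} {xs. P (take (Suc t) (map (mean_field n) xs))} =
         measure_pmf.prob (mean_field_kernel n p alpha q ar ad m) {m'}"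
proof -
  let ?mf = "mean_field n"
  let ?M = "traj n p alpha q init g t"
  define K where "K = (\<lambda>xs. map_pmf (\<lambda>x'. xs @ [x'])
    (next_state n p alpha q (g (length xs) False (map ?mf xs)) (g (length xs) True (map ?mf xs))
      (last xs)))"
  have traj_Suc: "traj n p alpha q init g (Suc t) = bind_pmf ?M K"
    by (simp add: K_def Let_def)
  have determined: "ys \<in> {xs. P (take (Suc t) (map ?mf xs))} \<longleftrightarrow> xs \<in> {xs. P (map ?mf xs)}"
    if "xs \<in> set_pmf ?M" "ys \<in> set_pmf (K xs)" for xs ys
    using that length_set_pmf_traj[OF init_len] by (auto simp: K_def)
  have kernel: "measure_pmf.prob (K xs) {xs. map ?mf xs ! Suc t = m'} =
      measure_pmf.prob (mean_field_kernel n p alpha q ar ad m) {m'}"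
    if xs: "xs \<in> set_pmf ?M" "xs \<in> {xs. P (map ?mf xs)}" for xs
  proof -
    have len: "length xs = Suc t" "\<forall>x\<in>set xs. length x = n"
      using length_set_pmf_traj[OF init_len xs(1)] by auto
    then have "xs \<noteq> []" by auto
    with len have last: "last xs = xs ! t" "length (last xs) = n"
      by (simp_all add: last_conv_nth)
    have "?mf (last xs) = m" and actions: "g (length xs) False (map ?mf xs) = ar"
      "g (length xs) True (map ?mf xs) = ad"
      using current[of "map ?mf xs"] xs(2) len last(1) by auto
    have "measure_pmf.prob (K xs) {xs. map ?mf xs ! Suc t = m'} =
        measure_pmf.prob (map_pmf ?mf (next_state n p alpha q ar ad (last xs))) {m'}"
      unfolding K_def actions measure_map_pmf
      using len by (intro arg_cong2[where f=measure_pmf.prob]) (auto simp: nth_append)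
    also have "\<dots> = measure_pmf.prob (mean_field_kernel n p alpha q ar ad m) {m'}"
      using map_mean_field_next_state[OF last(2)] \<open>?mf (last xs) = m\<close> by simp
    finally show ?thesis .
  qed
  have "measure_pmf.prob (bind_pmf ?M K) {xs. P (take (Suc t) (map ?mf xs))} =
      measure_pmf.prob ?M {xs. P (map ?mf xs)}"
    by (rule measure_bind_pmf_determined) (rule determined)
  with pos have pos_M: "measure_pmf.prob ?M {xs. P (map ?mf xs)} \<noteq> 0"
    unfolding traj_Suc by simp
  show ?thesis
    unfolding traj_Suc using determined kernel pos_M by (rule cond_prob_bind_pmf_determined)
qed

theorem theorem1:
  fixes n k :: nat and p :: real
    and alpha :: "nat \<Rightarrow> real" and q :: "nat \<Rightarrow> real \<Rightarrow> real"
    and init :: "bool list pmf"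
    and g :: "nat \<Rightarrow> bool \<Rightarrow> real list \<Rightarrow> nat"
    and t :: nat and h :: "real list" and gr gd :: "nat \<Rightarrow> nat" and m' :: real
  assumes n_pos: "n \<ge> 1" and k_pos: "k \<ge> 1"
    and p_range: "0 < p" "p < 1"
    and alpha_range: "\<And>u. u \<in> {1..k} \<Longrightarrow> 0 \<le> alpha u \<and> alpha u \<le> 1"
    and q_range: "\<And>u m. u \<in> {1..k} \<Longrightarrow> m \<in> MF_space n \<Longrightarrow> 0 < q u m \<and> q u m \<le> 1"
    and init_len: "\<And>x. x \<in> set_pmf init \<Longrightarrow> length x = n"
    and g_range: "\<And>s b hh. g s b hh \<in> {1..k}"
    and t_pos: "t \<ge> 1"
    and h_len: "length h = t" and h_range: "set h \<subseteq> MF_space n"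
    and gr_range: "\<And>s. gr s \<in> {1..k}" and gd_range: "\<And>s. gd s \<in> {1..k}"
    and pos: "measure_pmf.prob (traj n p alpha q init g t)
               {xs. take t (map (mean_field n) xs) = h \<and>
                    (\<forall>s\<in>{1..t}. g s False (take s (map (mean_field n) xs)) = gr s \<and>
                                g s True (take s (map (mean_field n) xs)) = gd s)} > 0"
  shows "cond_prob (traj n p alpha q init g t)
           {xs. map (mean_field n) xs ! t = m'}
           {xs. take t (map (mean_field n) xs) = h \<and>
                (\<forall>s\<in>{1..t}. g s False (take s (map (mean_field n) xs)) = gr s \<and>
                            g s True (take s (map (mean_field n) xs)) = gd s)}
       = cond_prob (traj n p alpha q init g t)
           {xs. map (mean_field n) xs ! t = m'}
           {xs. map (mean_field n) xs ! (t - 1) = last h \<and>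
                g t False (take t (map (mean_field n) xs)) = gr t \<and>
                g t True (take t (map (mean_field n) xs)) = gd t}"
proof -
  let ?mf = "mean_field n" and ?traj = "traj n p alpha q init g t"
  obtain t0 where t: "t = Suc t0" using t_pos by (cases t) auto
  define history where "history hs \<longleftrightarrow> hs = h \<and>
    (\<forall>s\<in>{1..t}. g s False (take s hs) = gr s \<and> g s True (take s hs) = gd s)" for hs
  define current where "current hs \<longleftrightarrow>
    hs ! (t - 1) = last h \<and> g t False hs = gr t \<and> g t True hs = gd t" for hs
  have history_event: "{xs. take t (map ?mf xs) = h \<and>
      (\<forall>s\<in>{1..t}. g s False (take s (map ?mf xs)) = gr s \<and> g s True (take s (map ?mf xs)) = gd s)} =
    {xs. history (take t (map ?mf xs))}"
    by (auto simp: history_def min_def)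
  have current_event: "{xs. map ?mf xs ! (t - 1) = last h \<and>
      g t False (take t (map ?mf xs)) = gr t \<and> g t True (take t (map ?mf xs)) = gd t} =
    {xs. current (take t (map ?mf xs))}"
    using t_pos by (auto simp: current_def)
  have "h \<noteq> []" using h_len t_pos by auto
  then have history_current: "history hs \<Longrightarrow> current hs" for hs
    using h_len t_pos by (auto simp: history_def current_def last_conv_nth dest: bspec[where x=t])
  have markov: "cond_prob ?traj {xs. map ?mf xs ! t = m'} {xs. P (take t (map ?mf xs))} =
      measure_pmf.prob (mean_field_kernel n p alpha q (gr t) (gd t) (last h)) {m'}"
    if "\<And>hs. P hs \<Longrightarrow> current hs" "0 < measure_pmf.prob ?traj {xs. P (take t (map ?mf xs))}"
    for P
    unfolding t using that
    by (intro cond_prob_traj_next_mean_field[OF init_len]) (auto simp: current_def t)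
  have pos_history: "0 < measure_pmf.prob ?traj {xs. history (take t (map ?mf xs))}"
    using pos unfolding history_event .
  also have "\<dots> \<le> measure_pmf.prob ?traj {xs. current (take t (map ?mf xs))}"
    using history_current by (intro measure_pmf.finite_measure_mono) auto
  finally have pos_current: "0 < measure_pmf.prob ?traj {xs. current (take t (map ?mf xs))}" .
  show ?thesis
    unfolding history_event current_event
    using markov[OF history_current pos_history] markov[OF _ pos_current] by simp
qed

end
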